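(* Let $\gamma=(1+\sqrt5)/2$ and let $(\mathbf{w}_i)_{i\ge0}$ be a Fibonacci sequence in $\mathrm{GL}_2(\mathbb{R})$ (i.e. $\mathbf{w}_{i+2}=\mathbf{w}_{i+1}\mathbf{w}_i$). Suppose there are real $c_1,c_2>0$ with $c_1\|\mathbf{w}_i\|\|\mathbf{w}_{i+1}\|\le\|\mathbf{w}_{i+2}\|\le c_2\|\mathbf{w}_i\|\|\mathbf{w}_{i+1}\|$ for all $i\ge0$. Then there are constants $c_3,c_4>0$ such that for all $i\ge0$, $c_3\|\mathbf{w}_i\|^\gamma\le\|\mathbf{w}_{i+1}\|\le c_4\|\mathbf{w}_i\|^\gamma$ and $c_3|\det(\mathbf{w}_i)|^\gamma\le|\det(\mathbf{w}_{i+1})|\le c_4|\det(\mathbf{w}_i)|^\gamma$. Moreover, if $\alpha,\beta\ge0$ are such that $(c_2\|\mathbf{w}_i\|)^\alpha\le|\det(\mathbf{w}_i)|\le(c_1\|\mathbf{w}_i\|)^\beta$ holds for $i=0$ and $i=1$, then it holds for every $i\ge0$.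
   Context: For a $2\times2$ real matrix $\mathbf{w}$, $\|\mathbf{w}\|$ denotes the largest absolute value of its coefficients. *)

theory Defs
  imports "HOL-Analysis.Analysis"
begin

definition maxnorm :: "real^2^2 \<Rightarrow> real" where
  "maxnorm w = Max {\<bar>w $ i $ j\<bar> | i j. True}"

definition golden :: real where
  "golden = (1 + sqrt 5) / 2"

end

theory Submission
  imports Defs
begin

text \<open>Taking logarithms, both the norms and the absolute determinants become real sequences
  that satisfy the Fibonacci recursion up to a bounded error (exactly, for determinants).
  For such a sequence \<open>a\<close>, the defect \<open>a (i+1) - \<gamma> a i\<close> is multiplied by \<open>-(\<gamma> - 1) = -1/\<gamma>\<close>
  at each step, up to that error, so it stays bounded; exponentiating gives the power laws.
  The bounds relating determinant and norm propagate by induction, because the determinant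
  is multiplicative and the norm is multiplicative up to the factors \<open>c\<^sub>1\<close> and \<open>c\<^sub>2\<close>.\<close>

lemma golden_sq: "golden\<^sup>2 = golden + 1"
  unfolding golden_def by (simp add: power2_eq_square field_simps)

lemma golden_gt_1: "golden > 1"
  and golden_lt_2: "golden < 2"
proof -
  have "2 < sqrt 5" "sqrt 5 < 3"
    by (simp_all add: real_less_rsqrt real_less_lsqrt)
  then show "golden > 1" "golden < 2"
    unfolding golden_def by simp_all
qed

lemma abs_le_of_contraction:
  fixes b :: "nat \<Rightarrow> real"
  assumes step: "\<And>i. \<bar>b (Suc i)\<bar> \<le> q * \<bar>b i\<bar> + E"
    and "0 \<le> q" "q < 1" "0 \<le> E"
  shows "\<bar>b i\<bar> \<le> \<bar>b 0\<bar> + E / (1 - q)"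
proof (induction i)
  case 0
  then show ?case using assms by simp
next
  case (Suc i)
  have "q * \<bar>b i\<bar> \<le> q * (\<bar>b 0\<bar> + E / (1 - q))"
    using Suc assms by (simp add: mult_left_mono)
  also have "\<dots> \<le> \<bar>b 0\<bar> + E / (1 - q) - E"
  proof -
    have "q * (E / (1 - q)) = E / (1 - q) - E"
      using assms by (simp add: field_simps)
    moreover have "q * \<bar>b 0\<bar> \<le> \<bar>b 0\<bar>"
      using assms by (simp add: mult_left_le_one_le)
    ultimately show ?thesis by (simp add: distrib_left)
  qed
  finally show ?case using step[of i] by linarith
qed

lemma almost_fibonacci_golden_bounded:
  fixes a :: "nat \<Rightarrow> real"
  assumes "\<And>i. \<bar>a (i + 2) - a (i + 1) - a i\<bar> \<le> E"
  shows "\<exists>B. \<forall>i. \<bar>a (i + 1) - golden * a i\<bar> \<le> B"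
proof -
  define b where "b i = a (i + 1) - golden * a i" for i
  have "E \<ge> 0"
    using assms[of 0] by linarith
  have step: "\<bar>b (Suc i)\<bar> \<le> (golden - 1) * \<bar>b i\<bar> + E" for i
  proof -
    have "(golden - 1) * b i = (golden - 1) * a (i + 1) - ((golden - 1) * golden) * a i"
      unfolding b_def by (simp add: algebra_simps)
    also have "(golden - 1) * golden = 1"
      using golden_sq by (simp add: power2_eq_square algebra_simps)
    finally have "b (Suc i) = (a (i + 2) - a (i + 1) - a i) - (golden - 1) * b i"
      unfolding b_def by (simp add: algebra_simps)
    then have "\<bar>b (Suc i)\<bar> \<le> \<bar>a (i + 2) - a (i + 1) - a i\<bar> + (golden - 1) * \<bar>b i\<bar>"
      using abs_triangle_ineq4[of "a (i + 2) - a (i + 1) - a i" "(golden - 1) * b i"] golden_gt_1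
      by (simp add: abs_mult)
    then show ?thesis
      using assms[of i] by linarith
  qed
  have "\<bar>b i\<bar> \<le> \<bar>b 0\<bar> + E / (1 - (golden - 1))" for i
    using abs_le_of_contraction[of b, OF step] golden_gt_1 golden_lt_2 \<open>E \<ge> 0\<close> by simp
  then show ?thesis
    unfolding b_def by blast
qed

lemma almost_multiplicative_fibonacci_ln_golden_bounded:
  fixes x :: "nat \<Rightarrow> real"
  assumes pos: "\<And>i. x i > 0" and "c1 > 0" "c2 > 0"
    and lower: "\<And>i. c1 * x i * x (i + 1) \<le> x (i + 2)"
    and upper: "\<And>i. x (i + 2) \<le> c2 * x i * x (i + 1)"
  shows "\<exists>B. \<forall>i. \<bar>ln (x (i + 1)) - golden * ln (x i)\<bar> \<le> B"
proof (rule almost_fibonacci_golden_bounded)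
  fix i
  have "ln (c1 * x i * x (i + 1)) \<le> ln (x (i + 2))"
    using lower[of i] pos \<open>c1 > 0\<close> by simp
  moreover have "ln (x (i + 2)) \<le> ln (c2 * x i * x (i + 1))"
    using upper[of i] pos \<open>c2 > 0\<close> by simp
  moreover have "ln (c * x i * x (i + 1)) = ln c + ln (x i) + ln (x (i + 1))" if "c > 0" for c
    using pos[of i] pos[of "i + 1"] that by (simp add: ln_mult)
  ultimately show "\<bar>ln (x (i + 2)) - ln (x (i + 1)) - ln (x i)\<bar> \<le> \<bar>ln c1\<bar> + \<bar>ln c2\<bar>"
    using \<open>c1 > 0\<close> \<open>c2 > 0\<close> by fastforce
qed

lemma powr_bounds_of_abs_ln_le:
  fixes x y :: real
  assumes "x > 0" "y > 0" "\<bar>ln y - g * ln x\<bar> \<le> B"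
  shows "exp (- B) * x powr g \<le> y" "y \<le> exp B * x powr g"
proof -
  have "exp (- B) * x powr g = exp (g * ln x - B)"
    using \<open>x > 0\<close> by (simp add: powr_def flip: exp_add)
  also have "\<dots> \<le> exp (ln y)"
    using assms(3) by simp
  finally show "exp (- B) * x powr g \<le> y"
    using \<open>y > 0\<close> by simp
  have "exp (ln y) \<le> exp (g * ln x + B)"
    using assms(3) by simp
  also have "\<dots> = exp B * x powr g"
    using \<open>x > 0\<close> by (simp add: powr_def flip: exp_add)
  finally show "y \<le> exp B * x powr g"
    using \<open>y > 0\<close> by simp
qed

lemma abs_entry_le_maxnorm: "\<bar>w $ i $ j\<bar> \<le> maxnorm w"
proof -
  have "{\<bar>w $ i $ j\<bar> | i j. True} = (\<lambda>(i, j). \<bar>w $ i $ j\<bar>) ` UNIV"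
    by auto
  then have "finite {\<bar>w $ i $ j\<bar> | i j. True}"
    by simp
  then show ?thesis
    unfolding maxnorm_def by (rule Max_ge) blast
qed

lemma maxnorm_pos:
  assumes "w \<noteq> 0"
  shows "maxnorm w > 0"
proof -
  obtain i j where "w $ i $ j \<noteq> 0"
    using assms by (metis vec_eq_iff zero_index)
  then show ?thesis
    using abs_entry_le_maxnorm[of w i j] by linarith
qed

lemma invertible_nonzero:
  fixes A :: "'a::field ^ 'n ^ 'n"
  assumes "invertible A"
  shows "A \<noteq> 0"
proof
  assume "A = 0"
  then have "det A = 0"
    by (intro det_zero_row(2)[of undefined]) (simp add: row_def vec_eq_iff)
  with assms show False
    by (simp add: invertible_det_nz)
qed

lemma det_norm_bounds_step:
  fixes n0 n1 n2 d0 d1 :: real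
  assumes "c1 > 0" "c2 > 0" "\<alpha> \<ge> 0" "\<beta> \<ge> 0" "n0 > 0" "n1 > 0"
    and "c1 * n0 * n1 \<le> n2" "n2 \<le> c2 * n0 * n1"
    and "(c2 * n0) powr \<alpha> \<le> d0" "d0 \<le> (c1 * n0) powr \<beta>"
    and "(c2 * n1) powr \<alpha> \<le> d1" "d1 \<le> (c1 * n1) powr \<beta>"
  shows "(c2 * n2) powr \<alpha> \<le> d0 * d1" "d0 * d1 \<le> (c1 * n2) powr \<beta>"
proof -
  have "n2 > 0"
    using assms(7) mult_pos_pos[OF mult_pos_pos[OF assms(1,5)] assms(6)] by linarith
  have "d0 \<ge> 0" "d1 \<ge> 0"
    using assms(9,11) powr_ge_zero[of _ \<alpha>] by (meson order_trans)+
  have "(c2 * n2) powr \<alpha> \<le> (c2 * (c2 * n0 * n1)) powr \<alpha>"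
    using assms \<open>n2 > 0\<close> by (intro powr_mono2) auto
  also have "\<dots> = (c2 * n0) powr \<alpha> * (c2 * n1) powr \<alpha>"
    using assms by (simp flip: powr_mult add: algebra_simps)
  also have "\<dots> \<le> d0 * d1"
    using assms \<open>d0 \<ge> 0\<close> \<open>d1 \<ge> 0\<close> by (intro mult_mono) auto
  finally show "(c2 * n2) powr \<alpha> \<le> d0 * d1" .
  have "d0 * d1 \<le> (c1 * n0) powr \<beta> * (c1 * n1) powr \<beta>"
    using assms \<open>d0 \<ge> 0\<close> \<open>d1 \<ge> 0\<close> by (intro mult_mono) auto
  also have "\<dots> = (c1 * (c1 * n0 * n1)) powr \<beta>"
    using assms by (simp flip: powr_mult add: algebra_simps)
  also have "\<dots> \<le> (c1 * n2) powr \<beta>"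
    using assms \<open>n2 > 0\<close> by (intro powr_mono2) auto
  finally show "d0 * d1 \<le> (c1 * n2) powr \<beta>" .
qed

lemma det_norm_bounds_propagate:
  fixes n d :: "nat \<Rightarrow> real"
  assumes "c1 > 0" "c2 > 0" "\<alpha> \<ge> 0" "\<beta> \<ge> 0" "\<And>i. n i > 0"
    and "\<And>i. c1 * n i * n (i + 1) \<le> n (i + 2)" "\<And>i. n (i + 2) \<le> c2 * n i * n (i + 1)"
    and "\<And>i. d (i + 2) = d i * d (i + 1)"
    and "\<forall>i\<in>{0, 1}. (c2 * n i) powr \<alpha> \<le> d i \<and> d i \<le> (c1 * n i) powr \<beta>"
  shows "(c2 * n i) powr \<alpha> \<le> d i \<and> d i \<le> (c1 * n i) powr \<beta>"
proof -
  let ?P = "\<lambda>i. (c2 * n i) powr \<alpha> \<le> d i \<and> d i \<le> (c1 * n i) powr \<beta>"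
  have "?P i \<and> ?P (i + 1)"
  proof (induction i)
    case 0
    then show ?case using assms(9) by simp
  next
    case (Suc i)
    then have "?P (i + 2)"
      using det_norm_bounds_step[of c1 c2 \<alpha> \<beta> "n i" "n (i + 1)" "n (i + 2)" "d i" "d (i + 1)"]
        assms by simp
    with Suc show ?case by simp
  qed
  then show ?thesis by simp
qed

theorem proposition5p3:
  fixes w :: "nat \<Rightarrow> real^2^2" and c1 c2 :: real
  assumes inv: "\<And>i. invertible (w i)"
    and fib: "\<And>i. w (i + 2) = w (i + 1) ** w i"
    and c1: "c1 > 0" and c2: "c2 > 0"
    and lower: "\<And>i. c1 * maxnorm (w i) * maxnorm (w (i + 1)) \<le> maxnorm (w (i + 2))"
    and upper: "\<And>i. maxnorm (w (i + 2)) \<le> c2 * maxnorm (w i) * maxnorm (w (i + 1))"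
  shows "(\<exists>c3 c4. c3 > 0 \<and> c4 > 0 \<and>
           (\<forall>i. c3 * maxnorm (w i) powr golden \<le> maxnorm (w (i + 1)) \<and>
                maxnorm (w (i + 1)) \<le> c4 * maxnorm (w i) powr golden \<and>
                c3 * \<bar>det (w i)\<bar> powr golden \<le> \<bar>det (w (i + 1))\<bar> \<and>
                \<bar>det (w (i + 1))\<bar> \<le> c4 * \<bar>det (w i)\<bar> powr golden))
       \<and> (\<forall>\<alpha> \<beta> :: real. \<alpha> \<ge> 0 \<longrightarrow> \<beta> \<ge> 0 \<longrightarrow>
            (\<forall>i\<in>{0, 1}. (c2 * maxnorm (w i)) powr \<alpha> \<le> \<bar>det (w i)\<bar> \<and>
                          \<bar>det (w i)\<bar> \<le> (c1 * maxnorm (w i)) powr \<beta>) \<longrightarrow>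
            (\<forall>i. (c2 * maxnorm (w i)) powr \<alpha> \<le> \<bar>det (w i)\<bar> \<and>
                 \<bar>det (w i)\<bar> \<le> (c1 * maxnorm (w i)) powr \<beta>))"
proof -
  have norm_pos: "maxnorm (w i) > 0" for i
    using inv maxnorm_pos invertible_nonzero by blast
  have det_pos: "\<bar>det (w i)\<bar> > 0" for i
    using inv invertible_det_nz by force
  have det_mult: "\<bar>det (w (i + 2))\<bar> = \<bar>det (w i)\<bar> * \<bar>det (w (i + 1))\<bar>" for i
    using fib by (simp add: det_mul abs_mult)
  obtain B1 where B1: "\<And>i. \<bar>ln (maxnorm (w (i + 1))) - golden * ln (maxnorm (w i))\<bar> \<le> B1"
    using almost_multiplicative_fibonacci_ln_golden_bounded[OF norm_pos c1 c2 lower upper] by blast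
  obtain B2 where B2: "\<And>i. \<bar>ln (\<bar>det (w (i + 1))\<bar>) - golden * ln (\<bar>det (w i)\<bar>)\<bar> \<le> B2"
    using almost_multiplicative_fibonacci_ln_golden_bounded[of "\<lambda>i. \<bar>det (w i)\<bar>" 1 1]
      det_pos det_mult by auto
  define B where "B = max B1 B2"
  have ln_norm: "\<bar>ln (maxnorm (w (i + 1))) - golden * ln (maxnorm (w i))\<bar> \<le> B"
    and ln_det: "\<bar>ln (\<bar>det (w (i + 1))\<bar>) - golden * ln (\<bar>det (w i)\<bar>)\<bar> \<le> B" for i
    using B1[of i] B2[of i] unfolding B_def by linarith+
  note norm_powr = powr_bounds_of_abs_ln_le[OF norm_pos norm_pos ln_norm]
  note det_powr = powr_bounds_of_abs_ln_le[OF det_pos det_pos ln_det]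
  note det_norm = det_norm_bounds_propagate[of c1 c2 _ _ "\<lambda>i. maxnorm (w i)" "\<lambda>i. \<bar>det (w i)\<bar>",
    OF c1 c2 _ _ norm_pos lower upper det_mult]
  show ?thesis
    using norm_powr det_powr det_norm exp_gt_zero by blast
qed

end
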